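(* Let $B=B_1\circ B_2\circ\cdots\circ B_n$ be a composition of $n$ finite Blaschke products with $\deg B_j=k_j$ for $j=1,\dots,n$. Then $B$ has at most $\sum_{i=1}^n(k_i-1)$ distinct critical values.
   Context: A finite Blaschke product of degree $d$ is $B(z)=\gamma\prod_{j=1}^d \frac{z-a_j}{1-\overline{a_j}z}$ with $a_j\in\mathbb{D}$ and $|\gamma|=1$. The set of critical values of $B$ is $\{w\in\mathbb{D}: w=B(z)\text{ for some } z\in\mathbb{D} \text{ with } B'(z)=0\}$. *)

theory Defs
  imports "HOL-Complex_Analysis.Complex_Analysis"
begin

definition finite_blaschke :: "nat \<Rightarrow> (complex \<Rightarrow> complex) \<Rightarrow> bool" where
  "finite_blaschke d B \<longleftrightarrow>
     (\<exists>\<gamma> (a :: nat \<Rightarrow> complex). cmod \<gamma> = 1 \<and> (\<forall>j<d. a j \<in> ball 0 1) \<and>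
        (\<forall>z. B z = \<gamma> * (\<Prod>j<d. (z - a j) / (1 - cnj (a j) * z))))"

definition critical_values :: "(complex \<Rightarrow> complex) \<Rightarrow> complex set" where
  "critical_values B = {w \<in> ball 0 1. \<exists>z \<in> ball 0 1. w = B z \<and> deriv B z = 0}"

text \<open>Composition Bs 0 o Bs 1 o ... o Bs (n-1).\<close>
definition compose_all :: "nat \<Rightarrow> (nat \<Rightarrow> complex \<Rightarrow> complex) \<Rightarrow> complex \<Rightarrow> complex" where
  "compose_all n Bs = foldr (\<lambda>j f. Bs j \<circ> f) [0..<n] id"

end

theory Submission
  imports Defs "HOL-Computational_Algebra.Polynomial"
begin

text \<open>For a Blaschke product B of degree k with zeros a_j and unimodular factor gamma,
  B' = gamma N / (prod_j (1 - cnj a_j z))^2 with a polynomial N of degree at most 2k - 2.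
  At z = 1 each factor (z - a_j)(1 - cnj a_j z) equals |1 - a_j|^2, which makes N(1) > 0,
  and the symmetry of B under reflection in the circle makes the zero set of N invariant
  under z \<mapsto> 1 / cnj z. This reflection sends the nonzero zeros in the disc to distinct zeros
  outside it, so N has at most k - 1 zeros in the disc, and B at most k - 1 critical values.
  For a composition the chain rule gives crit(C \<circ> B) \<subseteq> crit C \<union> C(crit B),
  since a Blaschke product maps the disc into itself, and the bounds add up.\<close>

lemma blaschke_factor_norm_identity:
  "(cmod (1 - cnj a * z))^2 - (cmod (z - a))^2 = (1 - (cmod z)^2) * (1 - (cmod a)^2)"
proof -
  have "complex_of_real ((cmod (1 - cnj a * z))^2 - (cmod (z - a))^2) =
        complex_of_real ((1 - (cmod z)^2) * (1 - (cmod a)^2))"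
    by (simp only: of_real_diff of_real_mult of_real_1 complex_norm_square)
       (simp add: algebra_simps)
  then show ?thesis
    using of_real_eq_iff by blast
qed

lemma blaschke_factor_denom_nonzero:
  assumes "cmod a < 1" "cmod z < 1"
  shows "1 - cnj a * z \<noteq> 0"
proof -
  have "cmod (cnj a * z) < 1"
    using assms mult_strict_mono'[of "cmod a" 1 "cmod z" 1] by (simp add: norm_mult)
  then show ?thesis
    by auto
qed

lemma norm_blaschke_factor_less_1:
  assumes "cmod a < 1" "cmod z < 1"
  shows "cmod ((z - a) / (1 - cnj a * z)) < 1"
proof -
  have "(1 - (cmod z)^2) * (1 - (cmod a)^2) > 0"
    using assms by (simp add: abs_square_less_1)
  then have "(cmod (z - a))^2 < (cmod (1 - cnj a * z))^2"
    using blaschke_factor_norm_identity[of a z] by linarith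
  then have "cmod (z - a) < cmod (1 - cnj a * z)"
    using power2_less_imp_less norm_ge_zero by blast
  then show ?thesis
    using blaschke_factor_denom_nonzero[OF assms] by (simp add: norm_divide divide_less_eq)
qed

lemma blaschke_factor_has_field_derivative:
  assumes "1 - cnj b * z \<noteq> 0"
  shows "((\<lambda>z. (z - b) / (1 - cnj b * z)) has_field_derivative
           (1 - cnj b * b) / (1 - cnj b * z)^2) (at z)"
proof -
  have "((\<lambda>z. (z - b) / (1 - cnj b * z)) has_field_derivative
          ((1 - 0) * (1 - cnj b * z) - (z - b) * (0 - cnj b * 1)) / ((1 - cnj b * z) * (1 - cnj b * z)))
          (at z)"
    by (intro DERIV_divide DERIV_diff DERIV_ident DERIV_const DERIV_cmult assms)
  then show ?thesis
    by (simp add: power2_eq_square algebra_simps)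
qed

definition blaschke_pair_poly :: "complex \<Rightarrow> complex poly" where
  "blaschke_pair_poly b = [:-b, 1:] * [:1, - cnj b:]"

definition blaschke_pairs_poly :: "(nat \<Rightarrow> complex) \<Rightarrow> nat \<Rightarrow> complex poly" where
  "blaschke_pairs_poly a k = (\<Prod>j<k. blaschke_pair_poly (a j))"

text \<open>The recursion is the product rule: blaschke_deriv_poly a k is the numerator of the
  derivative of the product of the first k Blaschke factors.\<close>
fun blaschke_deriv_poly :: "(nat \<Rightarrow> complex) \<Rightarrow> nat \<Rightarrow> complex poly" where
  "blaschke_deriv_poly a 0 = 0"
| "blaschke_deriv_poly a (Suc k) =
     blaschke_pair_poly (a k) * blaschke_deriv_poly a k
     + smult (1 - cnj (a k) * a k) (blaschke_pairs_poly a k)"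

lemma poly_blaschke_pair_poly: "poly (blaschke_pair_poly b) z = (z - b) * (1 - cnj b * z)"
  by (simp add: blaschke_pair_poly_def algebra_simps)

lemma poly_blaschke_pairs_poly:
  "poly (blaschke_pairs_poly a k) z = (\<Prod>j<k. z - a j) * (\<Prod>j<k. 1 - cnj (a j) * z)"
  by (simp add: blaschke_pairs_poly_def poly_prod poly_blaschke_pair_poly prod.distrib)

lemma blaschke_pairs_poly_Suc:
  "blaschke_pairs_poly a (Suc k) = blaschke_pair_poly (a k) * blaschke_pairs_poly a k"
  by (simp add: blaschke_pairs_poly_def)

lemma blaschke_product_has_field_derivative:
  assumes "\<And>j. j < k \<Longrightarrow> 1 - cnj (a j) * z \<noteq> 0"
  shows "((\<lambda>z. \<Prod>j<k. (z - a j) / (1 - cnj (a j) * z)) has_field_derivative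
          poly (blaschke_deriv_poly a k) z / (\<Prod>j<k. 1 - cnj (a j) * z)^2) (at z)"
  using assms
proof (induction k)
  case 0
  then show ?case by simp
next
  case (Suc k)
  define P where "P = (\<Prod>j<k. z - a j)"
  define Q where "Q = (\<Prod>j<k. 1 - cnj (a j) * z)"
  define q where "q = 1 - cnj (a k) * z"
  have "Q \<noteq> 0" "q \<noteq> 0"
    using Suc.prems by (simp_all add: Q_def q_def)
  have IH: "((\<lambda>z. \<Prod>j<k. (z - a j) / (1 - cnj (a j) * z)) has_field_derivative
              poly (blaschke_deriv_poly a k) z / Q^2) (at z)"
    using Suc by (simp add: Q_def)
  have "((\<lambda>z. (\<Prod>j<k. (z - a j) / (1 - cnj (a j) * z)) * ((z - a k) / (1 - cnj (a k) * z)))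
          has_field_derivative
          poly (blaschke_deriv_poly a k) z / Q^2 * ((z - a k) / q)
          + (1 - cnj (a k) * a k) / q^2 * (P / Q)) (at z)"
    using DERIV_mult[OF IH blaschke_factor_has_field_derivative[OF \<open>q \<noteq> 0\<close>[unfolded q_def]]]
    by (simp add: P_def Q_def q_def prod_dividef)
  moreover have "poly (blaschke_deriv_poly a k) z / Q^2 * ((z - a k) / q)
                   + (1 - cnj (a k) * a k) / q^2 * (P / Q)
                 = poly (blaschke_deriv_poly a (Suc k)) z / (Q * q)^2"
  proof -
    have N: "poly (blaschke_deriv_poly a (Suc k)) z
            = (z - a k) * q * poly (blaschke_deriv_poly a k) z + (1 - cnj (a k) * a k) * (P * Q)"
      by (simp add: poly_blaschke_pair_poly poly_blaschke_pairs_poly P_def Q_def q_def)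
    show ?thesis
      unfolding N using \<open>Q \<noteq> 0\<close> \<open>q \<noteq> 0\<close> by (simp add: field_simps power2_eq_square)
  qed
  ultimately show ?case
    by (simp add: Q_def q_def)
qed

lemma degree_blaschke_pair_poly: "degree (blaschke_pair_poly b) \<le> 2"
  using degree_mult_le[of "[:-b, 1:]" "[:1, - cnj b:]"] by (simp add: blaschke_pair_poly_def)

lemma degree_blaschke_pairs_poly: "degree (blaschke_pairs_poly a k) \<le> 2 * k"
proof -
  have "degree (blaschke_pairs_poly a k) \<le> (\<Sum>j<k. degree (blaschke_pair_poly (a j)))"
    unfolding blaschke_pairs_poly_def using degree_prod_sum_le[of "{..<k}"] by simp
  also have "\<dots> \<le> (\<Sum>j<k. 2)"
    by (intro sum_mono degree_blaschke_pair_poly)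
  finally show ?thesis
    by simp
qed

lemma degree_blaschke_deriv_poly: "degree (blaschke_deriv_poly a k) \<le> 2 * k - 2"
proof (induction k)
  case (Suc k)
  have "degree (blaschke_pair_poly (a k) * blaschke_deriv_poly a k) \<le> 2 * Suc k - 2"
  proof (cases "k = 0")
    case False
    then show ?thesis
      using Suc.IH degree_blaschke_pair_poly[of "a k"]
        degree_mult_le[of "blaschke_pair_poly (a k)" "blaschke_deriv_poly a k"] by simp
  qed simp
  moreover have "degree (smult (1 - cnj (a k) * a k) (blaschke_pairs_poly a k)) \<le> 2 * Suc k - 2"
    using degree_blaschke_pairs_poly[of a k] by (simp add: order_trans[OF degree_smult_le])
  ultimately show ?case
    by (simp add: degree_add_le)
qed simp

lemma blaschke_pair_poly_reflect:
  assumes "z \<noteq> 0"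
  shows "poly (blaschke_pair_poly b) (1 / cnj z) * cnj z ^ 2 = cnj (poly (blaschke_pair_poly b) z)"
  using assms by (simp add: poly_blaschke_pair_poly field_simps power2_eq_square)

lemma blaschke_pairs_poly_reflect:
  assumes "z \<noteq> 0"
  shows "poly (blaschke_pairs_poly a k) (1 / cnj z) * cnj z ^ (2 * k)
           = cnj (poly (blaschke_pairs_poly a k) z)"
proof (induction k)
  case (Suc k)
  have "poly (blaschke_pairs_poly a (Suc k)) (1 / cnj z) * cnj z ^ (2 * Suc k)
     = (poly (blaschke_pair_poly (a k)) (1 / cnj z) * cnj z ^ 2)
       * (poly (blaschke_pairs_poly a k) (1 / cnj z) * cnj z ^ (2 * k))"
    by (simp add: blaschke_pairs_poly_Suc power_add mult_2 power2_eq_square algebra_simps)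
  then show ?case
    using Suc blaschke_pair_poly_reflect[OF assms] by (simp add: blaschke_pairs_poly_Suc)
qed (simp add: blaschke_pairs_poly_def)

lemma blaschke_deriv_poly_reflect:
  assumes "z \<noteq> 0"
  shows "poly (blaschke_deriv_poly a k) (1 / cnj z) * cnj z ^ (2 * k)
           = cnj (poly (blaschke_deriv_poly a k) z) * cnj z ^ 2"
proof (induction k)
  case (Suc k)
  have "poly (blaschke_deriv_poly a (Suc k)) (1 / cnj z) * cnj z ^ (2 * Suc k)
     = (poly (blaschke_pair_poly (a k)) (1 / cnj z) * cnj z ^ 2)
         * (poly (blaschke_deriv_poly a k) (1 / cnj z) * cnj z ^ (2 * k))
       + (1 - cnj (a k) * a k)
         * (poly (blaschke_pairs_poly a k) (1 / cnj z) * cnj z ^ (2 * k)) * cnj z ^ 2"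
    by (simp add: power_add mult_2 power2_eq_square algebra_simps)
  also have "\<dots> = cnj (poly (blaschke_deriv_poly a (Suc k)) z) * cnj z ^ 2"
    using Suc blaschke_pair_poly_reflect[OF assms] blaschke_pairs_poly_reflect[OF assms]
    by (simp add: algebra_simps)
  finally show ?case .
qed simp

lemma blaschke_deriv_poly_root_reflect:
  assumes "z \<noteq> 0" "poly (blaschke_deriv_poly a k) z = 0"
  shows "poly (blaschke_deriv_poly a k) (1 / cnj z) = 0"
  using blaschke_deriv_poly_reflect[OF assms(1), of a k] assms by simp

lemma poly_blaschke_pair_poly_1: "poly (blaschke_pair_poly b) 1 = of_real ((cmod (1 - b))^2)"
  using complex_norm_square[of "1 - b"] by (simp add: poly_blaschke_pair_poly)

lemma poly_blaschke_pairs_poly_1: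
  "poly (blaschke_pairs_poly a k) 1 = of_real (\<Prod>j<k. (cmod (1 - a j))^2)"
  by (simp add: blaschke_pairs_poly_def poly_prod poly_blaschke_pair_poly_1)

lemma one_minus_cnj_mult_self: "1 - cnj b * b = of_real (1 - (cmod b)^2)"
  using complex_norm_square[of b] by (simp add: mult.commute)

lemma Re_poly_blaschke_deriv_poly_1_pos:
  assumes "0 < k" "\<And>j. j < k \<Longrightarrow> cmod (a j) < 1"
  shows "0 < Re (poly (blaschke_deriv_poly a k) 1)"
  using assms
proof (induction k rule: nat_induct_non_zero)
  case 1
  then show ?case
    by (simp add: one_minus_cnj_mult_self abs_square_less_1 blaschke_pairs_poly_def)
next
  case (Suc k)
  have "0 < Re (poly (blaschke_deriv_poly a k) 1)"
    using Suc by simp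
  moreover have "0 < 1 - (cmod (a k))^2"
    using Suc.prems by (simp add: abs_square_less_1)
  moreover obtain q where "poly (blaschke_pairs_poly a k) 1 = of_real q" "0 < q"
  proof
    show "poly (blaschke_pairs_poly a k) 1 = of_real (\<Prod>j<k. (cmod (1 - a j))^2)"
      by (rule poly_blaschke_pairs_poly_1)
    have "a j \<noteq> 1" if "j < k" for j
      using Suc.prems[of j] that by auto
    then show "0 < (\<Prod>j<k. (cmod (1 - a j))^2)"
      by (intro prod_pos) simp
  qed
  ultimately show ?case
    by (simp add: poly_blaschke_pair_poly_1 one_minus_cnj_mult_self add_nonneg_pos)
qed

lemma blaschke_deriv_poly_nonzero:
  assumes "0 < k" "\<And>j. j < k \<Longrightarrow> cmod (a j) < 1"
  shows "blaschke_deriv_poly a k \<noteq> 0"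
  using Re_poly_blaschke_deriv_poly_1_pos[of k a] assms by auto

lemma card_roots_in_disc_le:
  fixes p :: "complex poly"
  assumes "p \<noteq> 0" "degree p \<le> 2 * m"
    and reflect: "\<And>z. z \<noteq> 0 \<Longrightarrow> poly p z = 0 \<Longrightarrow> poly p (1 / cnj z) = 0"
  shows "finite {z \<in> ball 0 1. poly p z = 0} \<and> card {z \<in> ball 0 1. poly p z = 0} \<le> m"
proof -
  define Z where "Z = {z \<in> ball 0 1. poly p z = 0}"
  define R where "R = (\<lambda>z::complex. 1 / cnj z)"
  have fin_roots: "finite {z. poly p z = 0}"
    using poly_roots_finite[OF assms(1)] .
  have "Z \<subseteq> {z. poly p z = 0}"
    by (auto simp: Z_def)
  then have "finite Z"
    using fin_roots finite_subset by blast
  have "Z \<inter> R ` (Z - {0}) = {}"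
    by (auto simp: Z_def R_def norm_divide divide_less_eq split: if_splits)
  moreover have "inj_on R (Z - {0})"
    by (simp add: R_def inj_on_def)
  ultimately have "card Z + card (Z - {0}) = card (Z \<union> R ` (Z - {0}))"
    using \<open>finite Z\<close> by (simp add: card_Un_disjoint card_image)
  also have "\<dots> \<le> card {z. poly p z = 0}"
    using \<open>Z \<subseteq> _\<close> fin_roots reflect by (intro card_mono) (auto simp: Z_def R_def)
  also have "\<dots> \<le> 2 * m"
    using card_poly_roots_bound[OF assms(1)] assms(2) by linarith
  finally have "card Z \<le> m"
    using card_Diff_singleton_if[of Z 0] by (auto split: if_splits)
  with \<open>finite Z\<close> show ?thesis
    by (simp add: Z_def)
qed

lemma finite_blaschkeE:
  assumes "finite_blaschke k B"
  obtains \<gamma> a where "cmod \<gamma> = 1" "\<And>j. j < k \<Longrightarrow> cmod (a j) < 1"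
    "B = (\<lambda>z. \<gamma> * (\<Prod>j<k. (z - a j) / (1 - cnj (a j) * z)))"
  using assms unfolding finite_blaschke_def by (auto simp: fun_eq_iff)

lemma finite_blaschke_holomorphic:
  assumes "finite_blaschke k B"
  shows "B holomorphic_on ball 0 1"
proof -
  obtain \<gamma> a where "cmod \<gamma> = 1" and a: "\<And>j. j < k \<Longrightarrow> cmod (a j) < 1"
    and B: "B = (\<lambda>z. \<gamma> * (\<Prod>j<k. (z - a j) / (1 - cnj (a j) * z)))"
    using assms by (rule finite_blaschkeE) (rule that)
  have "(\<lambda>z. (z - a j) / (1 - cnj (a j) * z)) holomorphic_on ball 0 1" if "j < k" for j
    using blaschke_factor_denom_nonzero[OF a[OF that]] by (intro holomorphic_intros) auto
  then show ?thesis
    unfolding B by (intro holomorphic_on_mult holomorphic_on_const holomorphic_on_prod) auto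
qed

lemma finite_blaschke_maps_disc:
  assumes "finite_blaschke k B" "1 \<le> k"
  shows "B ` ball 0 1 \<subseteq> ball 0 1"
proof clarify
  fix z :: complex
  assume "z \<in> ball 0 1"
  obtain \<gamma> a where "cmod \<gamma> = 1" and a: "\<And>j. j < k \<Longrightarrow> cmod (a j) < 1"
    and B: "B = (\<lambda>z. \<gamma> * (\<Prod>j<k. (z - a j) / (1 - cnj (a j) * z)))"
    using assms(1) by (rule finite_blaschkeE) (rule that)
  then have "cmod (B z) = (\<Prod>j<k. cmod ((z - a j) / (1 - cnj (a j) * z)))"
    by (simp add: norm_mult prod_norm)
  also have "\<dots> < (\<Prod>j<k. 1)"
  proof -
    have "cmod ((z - a j) / (1 - cnj (a j) * z)) < 1" if "j < k" for j
      using a[OF that] \<open>z \<in> ball 0 1\<close> norm_blaschke_factor_less_1 by simp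
    then show ?thesis
      using assms(2) by (intro prod_mono_strict[of 0]) (auto intro: less_imp_le)
  qed
  finally show "B z \<in> ball 0 1"
    by simp
qed

lemma finite_blaschke_critical_values:
  assumes "finite_blaschke k B" "1 \<le> k"
  shows "finite (critical_values B) \<and> card (critical_values B) \<le> k - 1"
proof -
  obtain \<gamma> a where "cmod \<gamma> = 1" and a: "\<And>j. j < k \<Longrightarrow> cmod (a j) < 1"
    and B: "B = (\<lambda>z. \<gamma> * (\<Prod>j<k. (z - a j) / (1 - cnj (a j) * z)))"
    using assms(1) by (rule finite_blaschkeE) (rule that)
  define Z where "Z = {z \<in> ball 0 1. poly (blaschke_deriv_poly a k) z = 0}"
  have "deriv B z = 0 \<longleftrightarrow> poly (blaschke_deriv_poly a k) z = 0" if "z \<in> ball 0 1" for z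
  proof -
    have denom: "1 - cnj (a j) * z \<noteq> 0" if "j < k" for j
      using a[OF that] \<open>z \<in> ball 0 1\<close> blaschke_factor_denom_nonzero by simp
    have "deriv B z = \<gamma> * (poly (blaschke_deriv_poly a k) z / (\<Prod>j<k. 1 - cnj (a j) * z)^2)"
      unfolding B by (intro DERIV_imp_deriv DERIV_cmult blaschke_product_has_field_derivative denom)
    then show ?thesis
      using denom \<open>cmod \<gamma> = 1\<close> by auto
  qed
  then have "critical_values B \<subseteq> B ` Z"
    by (auto simp: critical_values_def Z_def)
  moreover have "finite Z \<and> card Z \<le> k - 1"
    unfolding Z_def
  proof (rule card_roots_in_disc_le)
    show "blaschke_deriv_poly a k \<noteq> 0"
      using assms(2) a by (intro blaschke_deriv_poly_nonzero) auto
    show "degree (blaschke_deriv_poly a k) \<le> 2 * (k - 1)"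
      using degree_blaschke_deriv_poly[of a k] by simp
  qed (rule blaschke_deriv_poly_root_reflect)
  ultimately show ?thesis
    using card_mono[OF finite_imageI] card_image_le[of Z B] finite_subset[OF _ finite_imageI]
    by (meson order_trans)
qed

lemma compose_all_0: "compose_all 0 Bs = id"
  by (simp add: compose_all_def)

lemma compose_all_Suc: "compose_all (Suc n) Bs = compose_all n Bs \<circ> Bs n"
proof -
  have "foldr (\<lambda>j f. Bs j \<circ> f) xs g = foldr (\<lambda>j f. Bs j \<circ> f) xs id \<circ> g" for xs g
    by (induction xs) auto
  then show ?thesis
    by (simp add: compose_all_def)
qed

lemma compose_all_holomorphic:
  assumes "\<And>j. j < n \<Longrightarrow> Bs j holomorphic_on ball 0 1"
    and "\<And>j. j < n \<Longrightarrow> Bs j ` ball 0 1 \<subseteq> ball 0 1"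
  shows "compose_all n Bs holomorphic_on ball 0 1"
  using assms
proof (induction n)
  case (Suc n)
  then show ?case
    unfolding compose_all_Suc by (intro holomorphic_on_compose_gen) auto
qed (simp add: compose_all_0 holomorphic_on_id)

lemma critical_values_id: "critical_values id = {}"
  by (simp add: critical_values_def)

lemma critical_values_comp_subset:
  assumes "C holomorphic_on ball 0 1" "B holomorphic_on ball 0 1" "B ` ball 0 1 \<subseteq> ball 0 1"
  shows "critical_values (C \<circ> B) \<subseteq> critical_values C \<union> C ` critical_values B"
proof
  fix w
  assume "w \<in> critical_values (C \<circ> B)"
  then obtain z where "w \<in> ball 0 1" "z \<in> ball 0 1" "w = C (B z)" "deriv (C \<circ> B) z = 0"
    by (auto simp: critical_values_def)
  have "B z \<in> ball 0 1"
    using assms(3) \<open>z \<in> ball 0 1\<close> by blast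
  have "deriv (C \<circ> B) z = deriv C (B z) * deriv B z"
    using assms \<open>z \<in> ball 0 1\<close> \<open>B z \<in> ball 0 1\<close>
    by (intro deriv_chain holomorphic_on_imp_differentiable_at) auto
  with \<open>deriv (C \<circ> B) z = 0\<close> consider "deriv C (B z) = 0" | "deriv B z = 0"
    by auto
  then show "w \<in> critical_values C \<union> C ` critical_values B"
  proof cases
    case 1
    then have "w \<in> critical_values C"
      using \<open>w \<in> ball 0 1\<close> \<open>w = C (B z)\<close> \<open>B z \<in> ball 0 1\<close>
      by (auto simp: critical_values_def)
    then show ?thesis ..
  next
    case 2
    then have "B z \<in> critical_values B"
      using \<open>z \<in> ball 0 1\<close> \<open>B z \<in> ball 0 1\<close> by (auto simp: critical_values_def)
    then show ?thesis
      using \<open>w = C (B z)\<close> by blast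
  qed
qed

lemma critical_values_compose_all:
  assumes "\<And>j. j < n \<Longrightarrow> Bs j holomorphic_on ball 0 1"
    and "\<And>j. j < n \<Longrightarrow> Bs j ` ball 0 1 \<subseteq> ball 0 1"
    and "\<And>j. j < n \<Longrightarrow> finite (critical_values (Bs j))"
    and "\<And>j. j < n \<Longrightarrow> card (critical_values (Bs j)) \<le> c j"
  shows "finite (critical_values (compose_all n Bs)) \<and>
         card (critical_values (compose_all n Bs)) \<le> (\<Sum>j<n. c j)"
  using assms
proof (induction n)
  case 0
  show ?case
    unfolding compose_all_0 critical_values_id by simp
next
  case (Suc n)
  let ?C = "compose_all n Bs"
  have sub: "critical_values (compose_all (Suc n) Bs)
               \<subseteq> critical_values ?C \<union> ?C ` critical_values (Bs n)"
    unfolding compose_all_Suc using Suc.prems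
    by (intro critical_values_comp_subset compose_all_holomorphic) auto
  have IH: "finite (critical_values ?C)" "card (critical_values ?C) \<le> (\<Sum>j<n. c j)"
    using Suc by auto
  have fin: "finite (critical_values ?C \<union> ?C ` critical_values (Bs n))"
    using IH Suc.prems by simp
  have "card (critical_values (compose_all (Suc n) Bs))
          \<le> card (critical_values ?C \<union> ?C ` critical_values (Bs n))"
    by (rule card_mono[OF fin sub])
  also have "\<dots> \<le> card (critical_values ?C) + card (?C ` critical_values (Bs n))"
    by (rule card_Un_le)
  also have "\<dots> \<le> (\<Sum>j<Suc n. c j)"
    using IH card_image_le[of "critical_values (Bs n)" ?C] Suc.prems[of n] by simp
  finally show ?case
    using finite_subset[OF sub fin] by simp
qed

theorem proposition4p3:
  fixes n :: nat and Bs :: "nat \<Rightarrow> complex \<Rightarrow> complex" and k :: "nat \<Rightarrow> nat"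
  assumes "\<And>j. j < n \<Longrightarrow> k j \<ge> 1"
    and "\<And>j. j < n \<Longrightarrow> finite_blaschke (k j) (Bs j)"
  shows "finite (critical_values (compose_all n Bs)) \<and>
         card (critical_values (compose_all n Bs)) \<le> (\<Sum>j<n. k j - 1)"
proof (rule critical_values_compose_all)
  fix j
  assume "j < n"
  then show "Bs j holomorphic_on ball 0 1"
    using assms(2) finite_blaschke_holomorphic by blast
  show "Bs j ` ball 0 1 \<subseteq> ball 0 1"
    using assms \<open>j < n\<close> by (intro finite_blaschke_maps_disc)
  show "finite (critical_values (Bs j))" "card (critical_values (Bs j)) \<le> k j - 1"
    using finite_blaschke_critical_values[OF assms(2,1)] \<open>j < n\<close> by auto
qed

end
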